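(* Let $B\subseteq\mathcal{SC}\times\mathcal{SC}$ satisfy $B\subseteq\mathcal S(B,B)$, and let $\mathcal T=\{(\mathcal M^{-1}(\sigma_1),\mathcal M^{-1}(\sigma_2)) : \sigma_1B\sigma_2\}$. Then $\mathcal T\subseteq F_{\leq}(\mathcal T)$, i.e. $\mathcal T$ is a type simulation.
   Context: Fix base types $BT$ with preorder $\leq_{\mathsf b}$ and labels $\mathcal L$. Session type terms: $T::=\mathsf{end}\mid ?[M]T\mid ![M]T\mid \&\langle l_1{:}T_1,\dots,l_n{:}T_n\rangle\mid \oplus\langle l_1{:}T_1,\dots,l_n{:}T_n\rangle\mid \mu X.T\mid X$, $M::=T\mid\mathtt t$. Contract terms: $\sigma::=\mathbf 1\mid ?\mathtt t.\sigma\mid !\mathtt t.\sigma\mid !(\sigma).\sigma\mid ?(\sigma).\sigma\mid \sum_{i\in I}?l_i.\sigma_i\mid \bigoplus_{i\in I}!l_i.\sigma_i\mid \mu x.\sigma\mid x$. $\mathcal{ST}$, $\mathcal{SC}$ are the closed guarded terms. $\mathcal M$ is the homomorphic bijection from type terms to contract terms ($\mathsf{end}\mapsto\mathbf 1$, $![\mathtt t]S\mapsto!\mathtt t.\mathcal M(S)$, $?[\mathtt t]S\mapsto?\mathtt t.\mathcal M(S)$, $![T]S\mapsto!(\mathcal M(T)).\mathcal M(S)$, $?[T]S\mapsto?(\mathcal M(T)).\mathcal M(S)$, branch $\&\langle l_i{:}S_i\rangle\mapsto\sum_i?l_i.\mathcal M(S_i)$, choice $\oplus\langle l_i{:}S_i\rangle\mapsto\bigoplus_i!l_i.\mathcal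 M(S_i)$, $\mu X.S\mapsto\mu x.\mathcal M(S)$, $X\mapsto x$), with inverse $\mathcal M^{-1}$. For both languages $\mathrm{unfold}(\mu x.\sigma')=\mathrm{unfold}(\sigma'[\mu x.\sigma'/x])$, otherwise identity. $\mathcal S(R,B)$: set of contract pairs $(\sigma_1,\sigma_2)$ such that, depending on $\mathrm{unfold}(\sigma_1)$: $\mathbf 1$ forces $\mathrm{unfold}(\sigma_2)=\mathbf 1$; $?\mathtt t_1.\sigma_1'$ forces $?\mathtt t_2.\sigma_2'$ with $\sigma_1'R\sigma_2'$, $\mathtt t_1\leq_{\mathsf b}\mathtt t_2$; $!\mathtt t_1.\sigma_1'$ forces $!\mathtt t_2.\sigma_2'$ with $\sigma_1'R\sigma_2'$, $\mathtt t_2\leq_{\mathsf b}\mathtt t_1$; $!(\sigma^m_1).\sigma_1'$ forces $!(\sigma^m_2).\sigma_2'$ with $\sigma_1'R\sigma_2'$, $\sigma^m_2B\sigma^m_1$; $?(\sigma^m_1).\sigma_1'$ forces $?(\sigma^m_2).\sigma_2'$ with $\sigma_1'R\sigma_2'$, $\sigma^m_1B\sigma^m_2$; $\sum_{i\in I}?l_i.\sigma^1_i$ forces $\sum_{j\in J}?l_j.\sigma^2_j$ with $I\subseteq J$, $\sigma^1_iR\sigma^2_i$; $\bigoplus_{i\in I}!l_i.\sigma^1_i$ forces $\bigoplus_{j\in J}!l_j.\sigma^2_j$ with $J\subseteq I$, $\sigma^1_jR\sigma^2_j$ (forced forms are those of $\mathrm{unfold}(\sigma_2)$). $F_{\leq}(R)$,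 for $R\subseteq\mathcal{ST}^2$: pairs $(T,S)$ such that: $\mathrm{unfold}(T)=\mathsf{end}$ forces $\mathrm{unfold}(S)=\mathsf{end}$; $?[\mathtt t_1]S_1$ forces $\mathrm{unfold}(S)=?[\mathtt t_2]S_2$ with $S_1RS_2$, $\mathtt t_1\leq_{\mathsf b}\mathtt t_2$; $![\mathtt t_1]S_1$ forces $![\mathtt t_2]S_2$ with $S_1RS_2$, $\mathtt t_2\leq_{\mathsf b}\mathtt t_1$; $![T_1]S_1$ forces $![T_2]S_2$ with $S_1RS_2$, $T_2RT_1$; $?[T_1]S_1$ forces $?[T_2]S_2$ with $S_1RS_2$, $T_1RT_2$; $\&\langle l_1{:}T_1..l_m{:}T_m\rangle$ forces $\&\langle l_1{:}S_1..l_n{:}S_n\rangle$ with $m\le n$, $T_iRS_i$; $\oplus\langle l_1{:}T_1..l_m{:}T_m\rangle$ forces $\oplus\langle l_1{:}S_1..l_n{:}S_n\rangle$ with $n\le m$, $T_iRS_i$. A type simulation is $R$ with $R\subseteq F_\leq(R)$. *)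

theory Defs
  imports Main "HOL-Library.Finite_Map"
begin

datatype ('b, 'l) stype =
    End
  | InB 'b "('b, 'l) stype"
  | OutB 'b "('b, 'l) stype"
  | InS "('b, 'l) stype" "('b, 'l) stype"
  | OutS "('b, 'l) stype" "('b, 'l) stype"
  | Branch "('l, ('b, 'l) stype) fmap"
  | Choice "('l, ('b, 'l) stype) fmap"
  | TMu nat "('b, 'l) stype"
  | TVar nat

datatype ('b, 'l) contract =
    One
  | CInB 'b "('b, 'l) contract"
  | COutB 'b "('b, 'l) contract"
  | CInS "('b, 'l) contract" "('b, 'l) contract"
  | COutS "('b, 'l) contract" "('b, 'l) contract"
  | CExt "('l, ('b, 'l) contract) fmap"
  | CInt "('l, ('b, 'l) contract) fmap"
  | CMu nat "('b, 'l) contract"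
  | CVar nat

primrec M :: "('b, 'l) stype \<Rightarrow> ('b, 'l) contract" where
  "M End = One"
| "M (InB t S) = CInB t (M S)"
| "M (OutB t S) = COutB t (M S)"
| "M (InS T S) = CInS (M T) (M S)"
| "M (OutS T S) = COutS (M T) (M S)"
| "M (Branch f) = CExt (fmmap M f)"
| "M (Choice f) = CInt (fmmap M f)"
| "M (TMu x S) = CMu x (M S)"
| "M (TVar x) = CVar x"

primrec Minv :: "('b, 'l) contract \<Rightarrow> ('b, 'l) stype" where
  "Minv One = End"
| "Minv (CInB t s) = InB t (Minv s)"
| "Minv (COutB t s) = OutB t (Minv s)"
| "Minv (CInS m s) = InS (Minv m) (Minv s)"
| "Minv (COutS m s) = OutS (Minv m) (Minv s)"
| "Minv (CExt f) = Branch (fmmap Minv f)"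
| "Minv (CInt f) = Choice (fmmap Minv f)"
| "Minv (CMu x s) = TMu x (Minv s)"
| "Minv (CVar x) = TVar x"

primrec fvT :: "('b, 'l) stype \<Rightarrow> nat set" where
  "fvT End = {}"
| "fvT (InB t S) = fvT S"
| "fvT (OutB t S) = fvT S"
| "fvT (InS T S) = fvT T \<union> fvT S"
| "fvT (OutS T S) = fvT T \<union> fvT S"
| "fvT (Branch f) = \<Union>(fmran' (fmmap fvT f))"
| "fvT (Choice f) = \<Union>(fmran' (fmmap fvT f))"
| "fvT (TMu x S) = fvT S - {x}"
| "fvT (TVar x) = {x}"

primrec fvC :: "('b, 'l) contract \<Rightarrow> nat set" where
  "fvC One = {}"
| "fvC (CInB t s) = fvC s"
| "fvC (COutB t s) = fvC s"
| "fvC (CInS m s) = fvC m \<union> fvC s"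
| "fvC (COutS m s) = fvC m \<union> fvC s"
| "fvC (CExt f) = \<Union>(fmran' (fmmap fvC f))"
| "fvC (CInt f) = \<Union>(fmran' (fmmap fvC f))"
| "fvC (CMu x s) = fvC s - {x}"
| "fvC (CVar x) = {x}"

(* Variables occurring unguarded (not under any prefix) *)
primrec hvT :: "('b, 'l) stype \<Rightarrow> nat set" where
  "hvT End = {}"
| "hvT (InB t S) = {}"
| "hvT (OutB t S) = {}"
| "hvT (InS T S) = {}"
| "hvT (OutS T S) = {}"
| "hvT (Branch f) = {}"
| "hvT (Choice f) = {}"
| "hvT (TMu x S) = hvT S - {x}"
| "hvT (TVar x) = {x}"

primrec hvC :: "('b, 'l) contract \<Rightarrow> nat set" where
  "hvC One = {}"
| "hvC (CInB t s) = {}"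
| "hvC (COutB t s) = {}"
| "hvC (CInS m s) = {}"
| "hvC (COutS m s) = {}"
| "hvC (CExt f) = {}"
| "hvC (CInt f) = {}"
| "hvC (CMu x s) = hvC s - {x}"
| "hvC (CVar x) = {x}"

primrec guardedT :: "('b, 'l) stype \<Rightarrow> bool" where
  "guardedT End = True"
| "guardedT (InB t S) = guardedT S"
| "guardedT (OutB t S) = guardedT S"
| "guardedT (InS T S) = (guardedT T \<and> guardedT S)"
| "guardedT (OutS T S) = (guardedT T \<and> guardedT S)"
| "guardedT (Branch f) = (\<forall>b \<in> fmran' (fmmap guardedT f). b)"
| "guardedT (Choice f) = (\<forall>b \<in> fmran' (fmmap guardedT f). b)"
| "guardedT (TMu x S) = (x \<notin> hvT S \<and> guardedT S)"
| "guardedT (TVar x) = True"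

primrec guardedC :: "('b, 'l) contract \<Rightarrow> bool" where
  "guardedC One = True"
| "guardedC (CInB t s) = guardedC s"
| "guardedC (COutB t s) = guardedC s"
| "guardedC (CInS m s) = (guardedC m \<and> guardedC s)"
| "guardedC (COutS m s) = (guardedC m \<and> guardedC s)"
| "guardedC (CExt f) = (\<forall>b \<in> fmran' (fmmap guardedC f). b)"
| "guardedC (CInt f) = (\<forall>b \<in> fmran' (fmmap guardedC f). b)"
| "guardedC (CMu x s) = (x \<notin> hvC s \<and> guardedC s)"
| "guardedC (CVar x) = True"

definition ST :: "('b, 'l) stype set" where
  "ST = {T. fvT T = {} \<and> guardedT T}"

definition SC :: "('b, 'l) contract set" where
  "SC = {s. fvC s = {} \<and> guardedC s}"

(* Substitution of U for the free occurrences of variable x (only used with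
   closed U, so no capture can occur) *)
primrec substT :: "nat \<Rightarrow> ('b, 'l) stype \<Rightarrow> ('b, 'l) stype \<Rightarrow> ('b, 'l) stype" where
  "substT x U End = End"
| "substT x U (InB t S) = InB t (substT x U S)"
| "substT x U (OutB t S) = OutB t (substT x U S)"
| "substT x U (InS T S) = InS (substT x U T) (substT x U S)"
| "substT x U (OutS T S) = OutS (substT x U T) (substT x U S)"
| "substT x U (Branch f) = Branch (fmmap (substT x U) f)"
| "substT x U (Choice f) = Choice (fmmap (substT x U) f)"
| "substT x U (TMu y S) = (if y = x then TMu y S else TMu y (substT x U S))"
| "substT x U (TVar y) = (if y = x then U else TVar y)"

primrec substC :: "nat \<Rightarrow> ('b, 'l) contract \<Rightarrow> ('b, 'l) contract \<Rightarrow> ('b, 'l) contract" where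
  "substC x u One = One"
| "substC x u (CInB t s) = CInB t (substC x u s)"
| "substC x u (COutB t s) = COutB t (substC x u s)"
| "substC x u (CInS m s) = CInS (substC x u m) (substC x u s)"
| "substC x u (COutS m s) = COutS (substC x u m) (substC x u s)"
| "substC x u (CExt f) = CExt (fmmap (substC x u) f)"
| "substC x u (CInt f) = CInt (fmmap (substC x u) f)"
| "substC x u (CMu y s) = (if y = x then CMu y s else CMu y (substC x u s))"
| "substC x u (CVar y) = (if y = x then u else CVar y)"

partial_function (tailrec) unfoldT :: "('b, 'l) stype \<Rightarrow> ('b, 'l) stype" where
  "unfoldT T = (case T of TMu x S \<Rightarrow> unfoldT (substT x (TMu x S) S) | _ \<Rightarrow> T)"

partial_function (tailrec) unfoldC :: "('b, 'l) contract \<Rightarrow> ('b, 'l) contract" where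
  "unfoldC s = (case s of CMu x s' \<Rightarrow> unfoldC (substC x (CMu x s') s') | _ \<Rightarrow> s)"

definition Sfun :: "(('b::preorder, 'l) contract \<times> ('b, 'l) contract) set
    \<Rightarrow> (('b, 'l) contract \<times> ('b, 'l) contract) set
    \<Rightarrow> (('b, 'l) contract \<times> ('b, 'l) contract) set" where
  "Sfun R B = {(s1, s2). s1 \<in> SC \<and> s2 \<in> SC \<and>
     (case unfoldC s1 of
        One \<Rightarrow> unfoldC s2 = One
      | CInB t1 s1' \<Rightarrow> (\<exists>t2 s2'. unfoldC s2 = CInB t2 s2' \<and> (s1', s2') \<in> R \<and> t1 \<le> t2)
      | COutB t1 s1' \<Rightarrow> (\<exists>t2 s2'. unfoldC s2 = COutB t2 s2' \<and> (s1', s2') \<in> R \<and> t2 \<le> t1)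
      | COutS m1 s1' \<Rightarrow> (\<exists>m2 s2'. unfoldC s2 = COutS m2 s2' \<and> (s1', s2') \<in> R \<and> (m2, m1) \<in> B)
      | CInS m1 s1' \<Rightarrow> (\<exists>m2 s2'. unfoldC s2 = CInS m2 s2' \<and> (s1', s2') \<in> R \<and> (m1, m2) \<in> B)
      | CExt f1 \<Rightarrow> (\<exists>f2. unfoldC s2 = CExt f2 \<and> fmdom f1 |\<subseteq>| fmdom f2 \<and>
            (\<forall>l. l |\<in>| fmdom f1 \<longrightarrow> (the (fmlookup f1 l), the (fmlookup f2 l)) \<in> R))
      | CInt f1 \<Rightarrow> (\<exists>f2. unfoldC s2 = CInt f2 \<and> fmdom f2 |\<subseteq>| fmdom f1 \<and>
            (\<forall>l. l |\<in>| fmdom f2 \<longrightarrow> (the (fmlookup f1 l), the (fmlookup f2 l)) \<in> R))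
      | CMu _ _ \<Rightarrow> False
      | CVar _ \<Rightarrow> False)}"

definition Fle :: "(('b::preorder, 'l) stype \<times> ('b, 'l) stype) set
    \<Rightarrow> (('b, 'l) stype \<times> ('b, 'l) stype) set" where
  "Fle R = {(T, S). T \<in> ST \<and> S \<in> ST \<and>
     (case unfoldT T of
        End \<Rightarrow> unfoldT S = End
      | InB t1 S1 \<Rightarrow> (\<exists>t2 S2. unfoldT S = InB t2 S2 \<and> (S1, S2) \<in> R \<and> t1 \<le> t2)
      | OutB t1 S1 \<Rightarrow> (\<exists>t2 S2. unfoldT S = OutB t2 S2 \<and> (S1, S2) \<in> R \<and> t2 \<le> t1)
      | OutS T1 S1 \<Rightarrow> (\<exists>T2 S2. unfoldT S = OutS T2 S2 \<and> (S1, S2) \<in> R \<and> (T2, T1) \<in> R)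
      | InS T1 S1 \<Rightarrow> (\<exists>T2 S2. unfoldT S = InS T2 S2 \<and> (S1, S2) \<in> R \<and> (T1, T2) \<in> R)
      | Branch f1 \<Rightarrow> (\<exists>f2. unfoldT S = Branch f2 \<and> fmdom f1 |\<subseteq>| fmdom f2 \<and>
            (\<forall>l. l |\<in>| fmdom f1 \<longrightarrow> (the (fmlookup f1 l), the (fmlookup f2 l)) \<in> R))
      | Choice f1 \<Rightarrow> (\<exists>f2. unfoldT S = Choice f2 \<and> fmdom f2 |\<subseteq>| fmdom f1 \<and>
            (\<forall>l. l |\<in>| fmdom f2 \<longrightarrow> (the (fmlookup f1 l), the (fmlookup f2 l)) \<in> R))
      | TMu _ _ \<Rightarrow> False
      | TVar _ \<Rightarrow> False)}"

definition type_simulation :: "(('b::preorder, 'l) stype \<times> ('b, 'l) stype) set \<Rightarrow> bool" where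
  "type_simulation R \<longleftrightarrow> R \<subseteq> Fle R"

end

theory Submission
  imports Defs
begin

text \<open>\<open>M\<^sup>-\<^sup>1\<close> is an injective homomorphism that commutes with substitution and preserves
  closedness and guardedness; hence it also commutes with unfolding of closed guarded terms.
  Each clause of \<open>S(B,B)\<close> for \<open>unfold \<sigma>\<^sub>1\<close> is therefore literally the corresponding clause of
  \<open>F\<^sub>\<le>\<close> for \<open>unfold (M\<^sup>-\<^sup>1 \<sigma>\<^sub>1)\<close>, with the contract relation \<open>B\<close> transported along \<open>M\<^sup>-\<^sup>1\<close>.\<close>

lemma Minv_substC: "Minv (substC x u s) = substT x (Minv u) (Minv s)"
  by (induction s) (auto simp: fmap.map_comp intro!: fmap.map_cong)

lemma fvT_Minv: "fvT (Minv s) = fvC s"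
  by (induction s) (auto simp: image_image)

lemma hvT_Minv: "hvT (Minv s) = hvC s"
  by (induction s) auto

lemma guardedT_Minv: "guardedT (Minv s) = guardedC s"
  by (induction s) (auto simp: image_image hvT_Minv)

lemma Minv_SC: "s \<in> SC \<Longrightarrow> Minv s \<in> ST"
  by (simp add: SC_def ST_def fvT_Minv guardedT_Minv)

lemma hvC_subset_fvC: "hvC s \<subseteq> fvC s"
  by (induction s) auto

lemma hvC_substC: "hvC (substC x u s) \<subseteq> hvC s \<union> hvC u"
  by (induction s) auto

lemma fvC_substC: "fvC (substC x u s) \<subseteq> (fvC s - {x}) \<union> fvC u"
  by (induction s) (auto simp: fmran'_def)

lemma guardedC_substC:
  "guardedC s \<Longrightarrow> guardedC u \<Longrightarrow> hvC u = {} \<Longrightarrow> guardedC (substC x u s)"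
  by (induction s) (auto simp: fmran'_def dest!: hvC_substC[THEN subsetD])

lemma substC_CMu_SC:
  assumes "CMu x t \<in> SC"
  shows "substC x (CMu x t) t \<in> SC"
proof -
  have "hvC (CMu x t) = {}"
    using assms hvC_subset_fvC[of "CMu x t"] by (auto simp: SC_def)
  then show ?thesis
    using assms fvC_substC[of x "CMu x t" t] guardedC_substC[of t "CMu x t" x]
    by (auto simp: SC_def)
qed

fun mu_depth :: "('b, 'l) contract \<Rightarrow> nat" where
  "mu_depth (CMu x s) = Suc (mu_depth s)"
| "mu_depth _ = 0"

lemma mu_depth_substC: "x \<notin> hvC s \<Longrightarrow> mu_depth (substC x u s) = mu_depth s"
  by (induction s) auto

text \<open>Unfolding terminates because guardedness keeps \<open>x\<close> out of head position in \<open>\<mu>x. t\<close>,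
  so each step removes one leading binder; the induction is on their number.\<close>

lemma unfoldT_Minv: "s \<in> SC \<Longrightarrow> unfoldT (Minv s) = Minv (unfoldC s)"
proof (induction "mu_depth s" arbitrary: s)
  case 0
  then show ?case
    by (cases s) (auto simp: unfoldT.simps unfoldC.simps)
next
  case (Suc n)
  then obtain x t where s: "s = CMu x t"
    by (cases s) auto
  have "mu_depth (substC x s t) = n"
    using Suc.hyps(2) Suc.prems mu_depth_substC[of x t s] by (simp add: s SC_def)
  with Suc.hyps(1) have "unfoldT (Minv (substC x s t)) = Minv (unfoldC (substC x s t))"
    using Suc.prems substC_CMu_SC by (auto simp: s)
  then show ?case
    by (subst unfoldT.simps, subst unfoldC.simps) (simp add: s Minv_substC)
qed

definition Minv_rel ::
    "(('b, 'l) contract \<times> ('b, 'l) contract) set \<Rightarrow> (('b, 'l) stype \<times> ('b, 'l) stype) set" where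
  "Minv_rel R = (\<lambda>(s1, s2). (Minv s1, Minv s2)) ` R"

lemma M_Minv [simp]: "M (Minv s) = s"
  by (induction s) (auto simp: fmap.map_comp fmap.map_ident_strong)

lemma inj_Minv: "inj Minv"
  by (metis M_Minv injI)

lemma Minv_pair_in_Minv_rel_iff [simp]:
  "(Minv s1, Minv s2) \<in> Minv_rel R \<longleftrightarrow> (s1, s2) \<in> R"
  by (auto simp: Minv_rel_def inj_eq[OF inj_Minv])

lemma the_map_option_fmlookup:
  "l |\<in>| fmdom f \<Longrightarrow> the (map_option g (fmlookup f l)) = g (the (fmlookup f l))"
  by (auto simp: fmlookup_dom_iff)

lemma Sfun_imp_Fle_Minv_rel:
  assumes "(s1, s2) \<in> Sfun R B"
  shows "(Minv s1, Minv s2) \<in> Fle (Minv_rel (R \<union> B))"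
proof -
  have SC: "s1 \<in> SC" "s2 \<in> SC"
    using assms by (auto simp: Sfun_def)
  show ?thesis
    using assms
    by (cases "unfoldC s1")
      (auto simp: Sfun_def Fle_def Minv_SC SC unfoldT_Minv the_map_option_fmlookup fsubsetD)
qed

lemma Minv_rel_subset_Fle:
  assumes "R \<subseteq> Sfun Q Q"
  shows "Minv_rel R \<subseteq> Fle (Minv_rel Q)"
  using assms Sfun_imp_Fle_Minv_rel[of _ _ Q Q] by (auto simp: Minv_rel_def)

text \<open>The hypothesis \<open>B \<subseteq> SC \<times> SC\<close> is implied by the second one, since \<open>Sfun\<close>
  only relates closed guarded contracts.\<close>

theorem mainTheorem15:
  fixes B :: "(('b::preorder, 'l) contract \<times> ('b, 'l) contract) set"
  assumes "B \<subseteq> SC \<times> SC"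
    and "B \<subseteq> Sfun B B"
  shows "(\<lambda>(s1, s2). (Minv s1, Minv s2)) ` B
           \<subseteq> Fle ((\<lambda>(s1, s2). (Minv s1, Minv s2)) ` B)"
  using Minv_rel_subset_Fle[OF assms(2)] unfolding Minv_rel_def .

end
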